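(* Let $X$ be a random variable in a sublinear expectation space and let $\{X^\alpha:\alpha\in\mathcal A\}$ be a family of random variables on a classical probability space $(\Omega',\mathcal F,P)$. Suppose that $$\hat{\mathbb E}[\varphi(X)]=\sup_{\alpha\in\mathcal A}E_P[\varphi(X^\alpha)]\quad\text{for all }\varphi\in C_{l.Lip}(\mathbb R).$$ Then for every continuity point $y$ of the upper cdf $\overline F_X$, $$\overline F_X(y)=\sup_{\alpha\in\mathcal A}P(X^\alpha\le y),$$ and for every continuity point $y$ of the lower cdf $\underline F_X$, $$\underline F_X(y)=\inf_{\alpha\in\mathcal A}P(X^\alpha\le y).$$
   Context: Sublinear expectation $\hat{\mathbb E}[Z]=\sup_{Q\in\mathcal P}E_Q[Z]$ for a family $\mathcal P$ of probability measures on $(\Omega,\mathcal F_0)$, defined in particular on indicators: upper probability $\mathbb V(A)=\hat{\mathbb E}[\mathbf 1_A]=\sup_{Q\in\mathcal P}Q(A)$. Upper cdf $\overline F_X(y)=\hat{\mathbb E}[\mathbf 1_{\{X\le y\}}]$; lower cdf $\underline F_X(y)=-\hat{\mathbb E}[-\mathbf 1_{\{X\le y\}}]$. $C_{l.Lip}(\mathbb R)$: functions with $|\varphi(x)-\varphi(y)|\le C_\varphi(1+|x|^k+|y|^k)|x-y|$ for some $k\in\mathbb N$, $C_\varphi>0$. *)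

theory Defs
  imports "HOL-Probability.Probability"
begin

text \<open>Sublinear expectation generated by a family of probability measures:
  E^[Z] = sup over Q in Ps of E_Q[Z].\<close>
definition sub_exp :: "'a measure set \<Rightarrow> ('a \<Rightarrow> real) \<Rightarrow> real" where
  "sub_exp Ps Z = (SUP Q\<in>Ps. integral\<^sup>L Q Z)"

definition upper_cdf :: "'a measure set \<Rightarrow> ('a \<Rightarrow> real) \<Rightarrow> real \<Rightarrow> real" where
  "upper_cdf Ps X y = sub_exp Ps (indicator {w. X w \<le> y})"

definition lower_cdf :: "'a measure set \<Rightarrow> ('a \<Rightarrow> real) \<Rightarrow> real \<Rightarrow> real" where
  "lower_cdf Ps X y = - sub_exp Ps (\<lambda>w. - indicator {w. X w \<le> y} w)"

definition C_lLip :: "(real \<Rightarrow> real) set" where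
  "C_lLip = {\<phi>. \<exists>C>0. \<exists>k::nat. \<forall>x y.
      \<bar>\<phi> x - \<phi> y\<bar> \<le> C * (1 + \<bar>x\<bar> ^ k + \<bar>y\<bar> ^ k) * \<bar>x - y\<bar>}"

end

theory Submission
  imports Defs
begin

text \<open>Pushing every measure forward along its random variable turns both sides of the hypothesis
  into sublinear expectations of families of probability measures on the real line, and the two
  cdfs into the upper and lower cdfs of the identity. For \<open>c < d\<close> the piecewise linear ramp
  \<open>ramp c d\<close>, which is Lipschitz and hence in \<open>C_lLip\<close>, satisfies
  \<open>1{x \<le> c} \<le> ramp c d \<le> 1{x \<le> d}\<close>. By monotonicity each cdf at \<open>c\<close> is dominated by the other
  one at \<open>d\<close>; continuity of the first cdf at \<open>y\<close> squeezes the two together at \<open>y\<close>.\<close>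

definition ramp :: "real \<Rightarrow> real \<Rightarrow> real \<Rightarrow> real" where
  "ramp c d x = max 0 (min 1 ((d - x) / (d - c)))"

lemma ramp_measurable [measurable]: "ramp c d \<in> borel_measurable borel"
  unfolding ramp_def by measurable

lemma ramp_bounded: "\<bar>ramp c d x\<bar> \<le> 1"
  by (simp add: ramp_def)

lemma indicator_atMost_le_ramp: "c < d \<Longrightarrow> indicator {..c} x \<le> ramp c d x"
  by (simp add: ramp_def indicator_def field_simps)

lemma ramp_le_indicator_atMost: "c < d \<Longrightarrow> ramp c d x \<le> indicator {..d} x"
  by (auto simp: ramp_def indicator_def field_simps)

lemma lipschitz_ramp: "c < d \<Longrightarrow> (1 / (d - c))-lipschitz_on UNIV (ramp c d)"
proof (intro lipschitz_onI)
  fix x y assume "c < d"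
  have "dist (ramp c d x) (ramp c d y) \<le> \<bar>(d - x) / (d - c) - (d - y) / (d - c)\<bar>"
    unfolding ramp_def dist_real_def by (simp add: max_def min_def abs_if)
  also have "\<dots> = 1 / (d - c) * dist x y"
    using \<open>c < d\<close> by (simp add: dist_real_def diff_divide_distrib[symmetric] abs_minus_commute)
  finally show "dist (ramp c d x) (ramp c d y) \<le> 1 / (d - c) * dist x y" .
qed simp

lemma lipschitz_in_C_lLip:
  assumes "L-lipschitz_on UNIV \<phi>"
  shows "\<phi> \<in> C_lLip"
proof -
  have "\<bar>\<phi> x - \<phi> y\<bar> \<le> (L + 1) * (1 + \<bar>x\<bar> ^ 0 + \<bar>y\<bar> ^ 0) * \<bar>x - y\<bar>" for x y
  proof -
    have "\<bar>\<phi> x - \<phi> y\<bar> \<le> L * \<bar>x - y\<bar>"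
      using lipschitz_onD[OF assms] by (simp add: dist_real_def)
    also have "\<dots> \<le> (L + 1) * 3 * \<bar>x - y\<bar>"
      using lipschitz_on_nonneg[OF assms] by (intro mult_right_mono) auto
    finally show ?thesis by simp
  qed
  moreover have "L + 1 > 0"
    using lipschitz_on_nonneg[OF assms] by simp
  ultimately show ?thesis
    unfolding C_lLip_def by blast
qed

lemma ramp_in_C_lLip: "c < d \<Longrightarrow> ramp c d \<in> C_lLip"
  by (rule lipschitz_in_C_lLip[OF lipschitz_ramp])

lemma uminus_ramp_in_C_lLip: "c < d \<Longrightarrow> (\<lambda>x. - ramp c d x) \<in> C_lLip"
  by (rule lipschitz_in_C_lLip[OF lipschitz_on_minus[OF lipschitz_ramp]])

lemma sub_exp_mono:
  assumes "Ms \<noteq> {}" and Ms: "\<And>Q. Q \<in> Ms \<Longrightarrow> prob_space Q \<and> sets Q = sets M"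
    and f: "f \<in> borel_measurable M" "\<And>x. \<bar>f x\<bar> \<le> B"
    and g: "g \<in> borel_measurable M" "\<And>x. \<bar>g x\<bar> \<le> B"
    and le: "\<And>x. f x \<le> g x"
  shows "sub_exp Ms f \<le> sub_exp Ms g"
proof -
  have integrable: "integrable Q h" if "Q \<in> Ms" "h \<in> borel_measurable M" "\<And>x. \<bar>h x\<bar> \<le> B" for Q h
  proof -
    interpret prob_space Q
      using Ms[OF \<open>Q \<in> Ms\<close>] by blast
    have "h \<in> borel_measurable Q"
      using Ms[OF \<open>Q \<in> Ms\<close>] that(2) by (metis measurable_cong_sets)
    then show ?thesis
      using that(3) by (intro integrable_const_bound[where B=B]) simp_all
  qed
  have "integral\<^sup>L Q g \<le> B" if "Q \<in> Ms" for Q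
  proof -
    interpret prob_space Q
      using Ms[OF \<open>Q \<in> Ms\<close>] by blast
    have "integral\<^sup>L Q g \<le> integral\<^sup>L Q (\<lambda>_. B)"
      using g(2) by (intro integral_mono integrable[OF that g]) (simp_all add: abs_le_iff)
    then show ?thesis
      by (simp add: prob_space)
  qed
  then have "bdd_above ((\<lambda>Q. integral\<^sup>L Q g) ` Ms)"
    by (intro bdd_aboveI2)
  moreover have "integral\<^sup>L Q f \<le> integral\<^sup>L Q g" if "Q \<in> Ms" for Q
    using le by (intro integral_mono integrable[OF that f] integrable[OF that g])
  ultimately show ?thesis
    unfolding sub_exp_def using \<open>Ms \<noteq> {}\<close> by (intro cSUP_mono) auto
qed

lemma upper_cdf_le_upper_cdf:
  fixes Ms Ns :: "real measure set"
  assumes "Ms \<noteq> {}" "\<And>Q. Q \<in> Ms \<Longrightarrow> prob_space Q \<and> sets Q = sets borel"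
    and "Ns \<noteq> {}" "\<And>Q. Q \<in> Ns \<Longrightarrow> prob_space Q \<and> sets Q = sets borel"
    and "sub_exp Ms (ramp c d) = sub_exp Ns (ramp c d)" and "c < d"
  shows "upper_cdf Ms (\<lambda>x. x) c \<le> upper_cdf Ns (\<lambda>x. x) d"
proof -
  have "upper_cdf Ms (\<lambda>x. x) c = sub_exp Ms (indicator {..c})"
    by (simp add: upper_cdf_def atMost_def)
  also have "\<dots> \<le> sub_exp Ms (ramp c d)"
    using assms(1,2,6) by (intro sub_exp_mono[where B=1] indicator_atMost_le_ramp ramp_bounded) auto
  also have "\<dots> = sub_exp Ns (ramp c d)"
    by (fact assms(5))
  also have "\<dots> \<le> sub_exp Ns (indicator {..d})"
    using assms(3,4,6) by (intro sub_exp_mono[where B=1] ramp_le_indicator_atMost ramp_bounded) auto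
  also have "\<dots> = upper_cdf Ns (\<lambda>x. x) d"
    by (simp add: upper_cdf_def atMost_def)
  finally show ?thesis .
qed

lemma lower_cdf_le_lower_cdf:
  fixes Ms Ns :: "real measure set"
  assumes "Ms \<noteq> {}" "\<And>Q. Q \<in> Ms \<Longrightarrow> prob_space Q \<and> sets Q = sets borel"
    and "Ns \<noteq> {}" "\<And>Q. Q \<in> Ns \<Longrightarrow> prob_space Q \<and> sets Q = sets borel"
    and "sub_exp Ms (\<lambda>x. - ramp c d x) = sub_exp Ns (\<lambda>x. - ramp c d x)" and "c < d"
  shows "lower_cdf Ms (\<lambda>x. x) c \<le> lower_cdf Ns (\<lambda>x. x) d"
proof -
  have "lower_cdf Ms (\<lambda>x. x) c = - sub_exp Ms (\<lambda>x. - indicator {..c} x)"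
    by (simp add: lower_cdf_def atMost_def)
  also have "\<dots> \<le> - sub_exp Ms (\<lambda>x. - ramp c d x)"
    using assms(1,2) indicator_atMost_le_ramp[OF \<open>c < d\<close>]
    by (simp, intro sub_exp_mono[where B=1]) (auto simp: ramp_bounded indicator_abs_le_1)
  also have "\<dots> = - sub_exp Ns (\<lambda>x. - ramp c d x)"
    by (simp add: assms(5))
  also have "\<dots> \<le> - sub_exp Ns (\<lambda>x. - indicator {..d} x)"
    using assms(3,4) ramp_le_indicator_atMost[OF \<open>c < d\<close>]
    by (simp, intro sub_exp_mono[where B=1]) (auto simp: ramp_bounded indicator_abs_le_1)
  also have "\<dots> = lower_cdf Ns (\<lambda>x. x) d"
    by (simp add: lower_cdf_def atMost_def)
  finally show ?thesis .
qed

lemma isCont_interleaved_eq: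
  fixes f g :: "real \<Rightarrow> real"
  assumes "isCont f y" and "\<And>c d. c < d \<Longrightarrow> f c \<le> g d" and "\<And>c d. c < d \<Longrightarrow> g c \<le> f d"
  shows "f y = g y"
proof (rule antisym)
  have "(f \<longlongrightarrow> f y) (at_left y)"
    using assms(1) by (simp add: isCont_def filterlim_at_split)
  moreover have "\<forall>\<^sub>F x in at_left y. f x \<le> g y"
    by (rule eventually_mono[OF eventually_at_left_real[of "y - 1" y]]) (use assms(2) in auto)
  ultimately show "f y \<le> g y"
    by (rule tendsto_upperbound) simp
next
  have "(f \<longlongrightarrow> f y) (at_right y)"
    using assms(1) by (simp add: isCont_def filterlim_at_split)
  moreover have "\<forall>\<^sub>F x in at_right y. g y \<le> f x"
    by (rule eventually_mono[OF eventually_at_right_less[of y]]) (use assms(3) in auto)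
  ultimately show "g y \<le> f y"
    by (rule tendsto_lowerbound) simp
qed

lemma isCont_C_lLip:
  assumes "\<phi> \<in> C_lLip"
  shows "isCont \<phi> x"
proof -
  obtain C k where bound: "\<And>y. \<bar>\<phi> y - \<phi> x\<bar> \<le> C * (1 + \<bar>y\<bar> ^ k + \<bar>x\<bar> ^ k) * \<bar>y - x\<bar>"
    using assms unfolding C_lLip_def by blast
  have "((\<lambda>y. C * (1 + \<bar>y\<bar> ^ k + \<bar>x\<bar> ^ k) * \<bar>y - x\<bar>)
          \<longlongrightarrow> C * (1 + \<bar>x\<bar> ^ k + \<bar>x\<bar> ^ k) * \<bar>x - x\<bar>) (at x)"
    by (intro tendsto_intros)
  then have majorant: "((\<lambda>y. C * (1 + \<bar>y\<bar> ^ k + \<bar>x\<bar> ^ k) * \<bar>y - x\<bar>) \<longlongrightarrow> 0) (at x)"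
    by simp
  have "((\<lambda>y. \<phi> y - \<phi> x) \<longlongrightarrow> 0) (at x)"
    by (rule Lim_null_comparison[OF always_eventually majorant]) (simp add: bound)
  then show ?thesis
    unfolding isCont_def by (rule LIM_zero_cancel)
qed

lemma borel_measurable_C_lLip: "\<phi> \<in> C_lLip \<Longrightarrow> \<phi> \<in> borel_measurable borel"
  by (intro borel_measurable_continuous_onI continuous_at_imp_continuous_on ballI isCont_C_lLip)

lemma upper_cdf_eq_SUP_measure:
  "upper_cdf Ms X y = (SUP Q\<in>Ms. measure Q {w \<in> space Q. X w \<le> y})"
  unfolding upper_cdf_def sub_exp_def by (simp add: Int_def conj_commute)

lemma lower_cdf_eq_INF_measure:
  "lower_cdf Ms X y = (INF Q\<in>Ms. measure Q {w \<in> space Q. X w \<le> y})"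
  unfolding lower_cdf_def sub_exp_def by (simp add: Int_def conj_commute Inf_real_def image_image)

lemma measure_distr_atMost:
  fixes X :: "'a \<Rightarrow> real"
  assumes "X \<in> borel_measurable M"
  shows "measure (distr M borel X) {x \<in> space (distr M borel X). x \<le> y} = measure M {w \<in> space M. X w \<le> y}"
proof -
  have "measure (distr M borel X) {..y} = measure M (X -` {..y} \<inter> space M)"
    using assms by (intro measure_distr atMost_borel) auto
  then show ?thesis
    by (simp add: atMost_def vimage_def Int_def conj_commute)
qed

lemma upper_cdf_distr_image:
  assumes "\<And>i. i \<in> I \<Longrightarrow> X i \<in> borel_measurable (M i)"
  shows "upper_cdf ((\<lambda>i. distr (M i) borel (X i)) ` I) (\<lambda>x. x) y =
           (SUP i\<in>I. measure (M i) {w \<in> space (M i). X i w \<le> y})"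
  unfolding upper_cdf_eq_SUP_measure image_image using assms
  by (intro SUP_cong refl measure_distr_atMost)

lemma lower_cdf_distr_image:
  assumes "\<And>i. i \<in> I \<Longrightarrow> X i \<in> borel_measurable (M i)"
  shows "lower_cdf ((\<lambda>i. distr (M i) borel (X i)) ` I) (\<lambda>x. x) y =
           (INF i\<in>I. measure (M i) {w \<in> space (M i). X i w \<le> y})"
  unfolding lower_cdf_eq_INF_measure image_image using assms
  by (intro INF_cong refl measure_distr_atMost)

lemma sub_exp_distr_image:
  assumes "\<And>i. i \<in> I \<Longrightarrow> X i \<in> borel_measurable (M i)" and "\<phi> \<in> borel_measurable borel"
  shows "sub_exp ((\<lambda>i. distr (M i) borel (X i)) ` I) \<phi> = (SUP i\<in>I. LINT w|M i. \<phi> (X i w))"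
  unfolding sub_exp_def image_image using assms
  by (intro SUP_cong refl integral_distr)

lemma cdf_eq_at_isCont_of_sub_exp_eq:
  fixes Ms Ns :: "real measure set"
  assumes Ms: "Ms \<noteq> {}" "\<And>Q. Q \<in> Ms \<Longrightarrow> prob_space Q \<and> sets Q = sets borel"
    and Ns: "Ns \<noteq> {}" "\<And>Q. Q \<in> Ns \<Longrightarrow> prob_space Q \<and> sets Q = sets borel"
    and eq: "\<And>\<phi>. \<phi> \<in> C_lLip \<Longrightarrow> sub_exp Ms \<phi> = sub_exp Ns \<phi>"
  shows "isCont (upper_cdf Ms (\<lambda>x. x)) y \<Longrightarrow> upper_cdf Ms (\<lambda>x. x) y = upper_cdf Ns (\<lambda>x. x) y"
    and "isCont (lower_cdf Ms (\<lambda>x. x)) y \<Longrightarrow> lower_cdf Ms (\<lambda>x. x) y = lower_cdf Ns (\<lambda>x. x) y"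
proof -
  have "upper_cdf Ms (\<lambda>x. x) c \<le> upper_cdf Ns (\<lambda>x. x) d"
    "upper_cdf Ns (\<lambda>x. x) c \<le> upper_cdf Ms (\<lambda>x. x) d"
    "lower_cdf Ms (\<lambda>x. x) c \<le> lower_cdf Ns (\<lambda>x. x) d"
    "lower_cdf Ns (\<lambda>x. x) c \<le> lower_cdf Ms (\<lambda>x. x) d" if "c < d" for c d
    using that eq[OF ramp_in_C_lLip[OF that]] eq[OF uminus_ramp_in_C_lLip[OF that]]
    by (intro upper_cdf_le_upper_cdf lower_cdf_le_lower_cdf Ms Ns; simp)+
  then show "isCont (upper_cdf Ms (\<lambda>x. x)) y \<Longrightarrow> upper_cdf Ms (\<lambda>x. x) y = upper_cdf Ns (\<lambda>x. x) y"
    and "isCont (lower_cdf Ms (\<lambda>x. x)) y \<Longrightarrow> lower_cdf Ms (\<lambda>x. x) y = lower_cdf Ns (\<lambda>x. x) y"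
    by (auto intro: isCont_interleaved_eq)
qed

text \<open>The hypotheses \<open>X_int\<close>, \<open>X_bdd\<close>, \<open>Xa_int\<close> and \<open>Xa_bdd\<close> are deliberately unused:
  \<open>rep\<close> is only applied to bounded ramps, whose integrals exist and are bounded anyway.\<close>

theorem mainTheorem11:
  fixes Ps :: "'a measure set" and M0 :: "'a measure" and X :: "'a \<Rightarrow> real"
    and P :: "'b measure" and A :: "'i set" and Xa :: "'i \<Rightarrow> 'b \<Rightarrow> real"
  assumes Ps_ne: "Ps \<noteq> {}"
    and Ps_prob: "\<And>Q. Q \<in> Ps \<Longrightarrow> prob_space Q"
    and Ps_sets: "\<And>Q. Q \<in> Ps \<Longrightarrow> sets Q = sets M0"
    and X_meas: "X \<in> borel_measurable M0"
    and X_int: "\<And>\<phi> Q. \<phi> \<in> C_lLip \<Longrightarrow> Q \<in> Ps \<Longrightarrow> integrable Q (\<lambda>w. \<phi> (X w))"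
    and X_bdd: "\<And>\<phi>. \<phi> \<in> C_lLip \<Longrightarrow> bdd_above ((\<lambda>Q. LINT w|Q. \<bar>\<phi> (X w)\<bar>) ` Ps)"
    and P_prob: "prob_space P"
    and A_ne: "A \<noteq> {}"
    and Xa_meas: "\<And>a. a \<in> A \<Longrightarrow> Xa a \<in> borel_measurable P"
    and Xa_int: "\<And>\<phi> a. \<phi> \<in> C_lLip \<Longrightarrow> a \<in> A \<Longrightarrow> integrable P (\<lambda>w. \<phi> (Xa a w))"
    and Xa_bdd: "\<And>\<phi>. \<phi> \<in> C_lLip \<Longrightarrow> bdd_above ((\<lambda>a. LINT w|P. \<phi> (Xa a w)) ` A)"
    and rep: "\<And>\<phi>. \<phi> \<in> C_lLip \<Longrightarrow>
                sub_exp Ps (\<lambda>w. \<phi> (X w)) = (SUP a\<in>A. LINT w|P. \<phi> (Xa a w))"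
  shows "(\<forall>y. isCont (upper_cdf Ps X) y \<longrightarrow>
           upper_cdf Ps X y = (SUP a\<in>A. measure P {w \<in> space P. Xa a w \<le> y})) \<and>
         (\<forall>y. isCont (lower_cdf Ps X) y \<longrightarrow>
           lower_cdf Ps X y = (INF a\<in>A. measure P {w \<in> space P. Xa a w \<le> y}))"
proof -
  define Ms where "Ms = (\<lambda>Q. distr Q borel X) ` Ps"
  define Ns where "Ns = (\<lambda>a. distr P borel (Xa a)) ` A"
  have X_meas_Q: "X \<in> borel_measurable Q" if "Q \<in> Ps" for Q
    using X_meas Ps_sets[OF that] by (metis measurable_cong_sets)
  have Ms: "Ms \<noteq> {}" "\<And>Q. Q \<in> Ms \<Longrightarrow> prob_space Q \<and> sets Q = sets borel"
    unfolding Ms_def using Ps_ne Ps_prob X_meas_Q by (auto intro!: prob_space.prob_space_distr)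
  have Ns: "Ns \<noteq> {}" "\<And>Q. Q \<in> Ns \<Longrightarrow> prob_space Q \<and> sets Q = sets borel"
    unfolding Ns_def using A_ne P_prob Xa_meas by (auto intro!: prob_space.prob_space_distr)
  have "sub_exp Ms \<phi> = sub_exp Ns \<phi>" if "\<phi> \<in> C_lLip" for \<phi>
  proof -
    have "sub_exp Ms \<phi> = (SUP Q\<in>Ps. LINT w|Q. \<phi> (X w))"
      unfolding Ms_def using X_meas_Q by (intro sub_exp_distr_image borel_measurable_C_lLip that)
    also have "\<dots> = (SUP a\<in>A. LINT w|P. \<phi> (Xa a w))"
      using rep[OF that] unfolding sub_exp_def .
    also have "\<dots> = sub_exp Ns \<phi>"
      unfolding Ns_def using Xa_meas
      by (intro sub_exp_distr_image[symmetric] borel_measurable_C_lLip that)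
    finally show ?thesis .
  qed
  note cdf_eq = cdf_eq_at_isCont_of_sub_exp_eq[OF Ms Ns this]
  have "upper_cdf Ps X = upper_cdf Ms (\<lambda>x. x)"
    unfolding fun_eq_iff upper_cdf_eq_SUP_measure[of Ps X] Ms_def using X_meas_Q
    by (intro allI upper_cdf_distr_image[symmetric])
  moreover have "lower_cdf Ps X = lower_cdf Ms (\<lambda>x. x)"
    unfolding fun_eq_iff lower_cdf_eq_INF_measure[of Ps X] Ms_def using X_meas_Q
    by (intro allI lower_cdf_distr_image[symmetric])
  moreover have "upper_cdf Ns (\<lambda>x. x) y = (SUP a\<in>A. measure P {w \<in> space P. Xa a w \<le> y})"
    "lower_cdf Ns (\<lambda>x. x) y = (INF a\<in>A. measure P {w \<in> space P. Xa a w \<le> y})" for y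
    unfolding Ns_def using Xa_meas by (simp_all add: upper_cdf_distr_image lower_cdf_distr_image)
  ultimately show ?thesis
    using cdf_eq by simp
qed

end
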